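(* Let $H$ be a connected graph, $G_n$ a graph, $p_n\in(0,1)$, and $$\beta_H(p_n)=\sum_{K=1}^{|V(H)|}p_n^{2|V(H)|-K}\sum_{A\subset V(G_n):|A|=K}t_H(A)^2.$$ Then $$\frac{(1-p_n)\beta_H(p_n)}{2^{|V(H)|}-1}\le\mathrm{Var}[T(H,G_n)]\le\beta_H(p_n).$$
   Context: $G_n$ is a simple labeled graph on $V(G_n)=\{1,\dots,|V(G_n)|\}$ with adjacency $(a_{ij})$; $H=(V(H),E(H))$ with $|Aut(H)|$ automorphisms. $V(G_n)_k$ is the set of $k$-tuples of distinct vertices, $\bar{\mathbf s}$ the set of entries. $M_H(\mathbf s)=\prod_{(i,j)\in E(H)}a_{s_is_j}$, $t_H(A)=\frac1{|Aut(H)|}\sum_{\mathbf s\in V(G_n)_{|V(H)|}:\bar{\mathbf s}\supseteq A}M_H(\mathbf s)$. $\{X_v\}$ i.i.d. Bernoulli$(p_n)$, $X_{\mathbf s}=\prod_uX_{s_u}$, $T(H,G_n)=\frac1{|Aut(H)|}\sum_{\mathbf s}M_H(\mathbf s)X_{\mathbf s}$. *)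

theory Defs
  imports "HOL-Probability.Probability"
begin

definition simple_graph_on :: "nat set \<Rightarrow> (nat \<Rightarrow> nat \<Rightarrow> bool) \<Rightarrow> bool" where
  "simple_graph_on V adj \<longleftrightarrow>
     (\<forall>i\<in>V. \<forall>j\<in>V. adj i j \<longrightarrow> adj j i) \<and> (\<forall>i\<in>V. \<not> adj i i)"

definition connected_graph_on :: "nat set \<Rightarrow> (nat \<Rightarrow> nat \<Rightarrow> bool) \<Rightarrow> bool" where
  "connected_graph_on V adj \<longleftrightarrow> V \<noteq> {} \<and>
     (\<forall>i\<in>V. \<forall>j\<in>V. (\<lambda>x y. x \<in> V \<and> y \<in> V \<and> adj x y)\<^sup>*\<^sup>* i j)"

definition edgesH :: "nat \<Rightarrow> (nat \<Rightarrow> nat \<Rightarrow> bool) \<Rightarrow> (nat \<times> nat) set" where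
  "edgesH h adjH = {(i, j). i < j \<and> j < h \<and> adjH i j}"

definition AutH :: "nat \<Rightarrow> (nat \<Rightarrow> nat \<Rightarrow> bool) \<Rightarrow> (nat \<Rightarrow> nat) set" where
  "AutH h adjH = {\<sigma> \<in> {0..<h} \<rightarrow>\<^sub>E {0..<h}. bij_betw \<sigma> {0..<h} {0..<h} \<and>
       (\<forall>i<h. \<forall>j<h. adjH i j \<longleftrightarrow> adjH (\<sigma> i) (\<sigma> j))}"

definition tuples :: "nat \<Rightarrow> nat \<Rightarrow> (nat \<Rightarrow> nat) set" where
  "tuples N k = {s \<in> {0..<k} \<rightarrow>\<^sub>E {1..N}. inj_on s {0..<k}}"

definition adjval :: "(nat \<Rightarrow> nat \<Rightarrow> bool) \<Rightarrow> nat \<Rightarrow> nat \<Rightarrow> real" where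
  "adjval a i j = (if a i j then 1 else 0)"

definition M_H :: "nat \<Rightarrow> (nat \<Rightarrow> nat \<Rightarrow> bool) \<Rightarrow> (nat \<Rightarrow> nat \<Rightarrow> bool) \<Rightarrow> (nat \<Rightarrow> nat) \<Rightarrow> real" where
  "M_H h adjH a s = (\<Prod>(i, j)\<in>edgesH h adjH. adjval a (s i) (s j))"

definition t_H :: "nat \<Rightarrow> (nat \<Rightarrow> nat \<Rightarrow> bool) \<Rightarrow> nat \<Rightarrow> (nat \<Rightarrow> nat \<Rightarrow> bool) \<Rightarrow> nat set \<Rightarrow> real" where
  "t_H h adjH N a A = (1 / real (card (AutH h adjH))) *
     (\<Sum>s\<in>{s \<in> tuples N h. A \<subseteq> s ` {0..<h}}. M_H h adjH a s)"

definition T_HG :: "nat \<Rightarrow> (nat \<Rightarrow> nat \<Rightarrow> bool) \<Rightarrow> nat \<Rightarrow> (nat \<Rightarrow> nat \<Rightarrow> bool) \<Rightarrow> (nat \<Rightarrow> bool) \<Rightarrow> real" where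
  "T_HG h adjH N a X = (1 / real (card (AutH h adjH))) *
     (\<Sum>s\<in>tuples N h. M_H h adjH a s * (\<Prod>u\<in>{0..<h}. (if X (s u) then 1 else 0)))"

definition bern_field :: "nat \<Rightarrow> real \<Rightarrow> (nat \<Rightarrow> bool) pmf" where
  "bern_field N p = Pi_pmf {1..N} False (\<lambda>_. bernoulli_pmf p)"

definition beta_H :: "nat \<Rightarrow> (nat \<Rightarrow> nat \<Rightarrow> bool) \<Rightarrow> nat \<Rightarrow> (nat \<Rightarrow> nat \<Rightarrow> bool) \<Rightarrow> real \<Rightarrow> real" where
  "beta_H h adjH N a p = (\<Sum>K=1..h. p ^ (2 * h - K) *
      (\<Sum>A\<in>{A. A \<subseteq> {1..N} \<and> card A = K}. (t_H h adjH N a A)\<^sup>2))"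

end

theory Submission
  imports Defs
begin

text \<open>Write \<open>T(H,G\<^sub>n)\<close> as \<open>\<Sum>\<^sub>s w(s) X(s)\<close> over tuples \<open>s\<close>, with nonnegative weights
  \<open>w(s) = M\<^sub>H(s) / |Aut(H)|\<close> and \<open>X(s)\<close> the indicator that all \<open>h = |V(H)|\<close> vertices of \<open>s\<close>
  are selected.  As \<open>E[X(s) X(s')] = p^(2h - j)\<close> with \<open>j = |s \<inter> s'|\<close>, the variance is
  \<open>\<Sum>\<^sub>s\<^sub>,\<^sub>s\<^sub>' w(s) w(s') (p^(2h - j) - p^(2h))\<close>; expanding \<open>t\<^sub>H(A)\<^sup>2\<close> and counting the \<open>K\<close>-sets
  inside \<open>s \<inter> s'\<close> gives \<open>\<beta>\<^sub>H(p) = \<Sum>\<^sub>s\<^sub>,\<^sub>s\<^sub>' w(s) w(s') \<Sum>\<^sub>K p^(2h - K) (j choose K)\<close>.  So it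
  suffices to compare the two coefficients for each \<open>j \<le> h\<close>: the summand \<open>K = j\<close> alone gives
  the upper bound, while \<open>\<Sum>\<^sub>K p^(2h - K) (j choose K) \<le> p^(2h - j) (2^j - 1)\<close>,
  \<open>2^j \<le> 2^h\<close> and \<open>1 - p \<le> 1 - p^j\<close> give the lower one.\<close>

lemma finite_set_pmf_bern_field: "finite (set_pmf (bern_field N p))"
  unfolding bern_field_def
  by (rule finite_subset[OF set_Pi_pmf_subset'[of "{1..N}"]]) auto

lemma integrable_bern_field [simp]: "integrable (measure_pmf (bern_field N p)) (f :: _ \<Rightarrow> real)"
  by (rule integrable_measure_pmf_finite[OF finite_set_pmf_bern_field])

lemma expectation_bern_field_all_selected:
  assumes "S \<subseteq> {1..N}" "0 \<le> p" "p \<le> 1"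
  shows "measure_pmf.expectation (bern_field N p) (\<lambda>X. of_bool (\<forall>v\<in>S. X v)) = p ^ card S"
proof -
  let ?B = "\<lambda>v. if v \<in> S then {True} else UNIV"
  have factor: "measure_pmf.prob (bernoulli_pmf p) (?B v) = (if v \<in> S then p else 1)" for v
    using assms(2,3) by (simp add: measure_pmf_single)
  have event: "{X. \<forall>v\<in>S. X v} = Pi {1..N} ?B"
    using assms(1) by (auto simp: Pi_iff) (metis in_mono singletonD)
  have "measure_pmf.expectation (bern_field N p) (\<lambda>X. of_bool (\<forall>v\<in>S. X v))
      = measure_pmf.expectation (bern_field N p) (indicator (Pi {1..N} ?B))"
    by (simp only: event[symmetric] indicator_def[abs_def] mem_Collect_eq)
  also have "\<dots> = measure_pmf.prob (bern_field N p) (Pi {1..N} ?B)"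
    by simp
  also have "\<dots> = (\<Prod>v\<in>{1..N}. if v \<in> S then p else 1)"
    unfolding bern_field_def by (simp add: measure_Pi_pmf_Pi factor)
  also have "\<dots> = p ^ card S"
    using assms(1) by (simp add: prod.If_cases Int_absorb1)
  finally show ?thesis .
qed

lemma prod_of_bool:
  "finite A \<Longrightarrow> (\<Prod>x\<in>A. of_bool (P x)) = (of_bool (\<forall>x\<in>A. P x) :: 'a :: comm_semiring_1)"
  by (induction A rule: finite_induct) auto

lemma variance_bern_field_monomial_sum:
  fixes w :: "'i \<Rightarrow> real"
  assumes S: "\<And>i. i \<in> I \<Longrightarrow> S i \<subseteq> {1..N}" and p: "0 \<le> p" "p \<le> 1"
  shows "measure_pmf.variance (bern_field N p) (\<lambda>X. \<Sum>i\<in>I. w i * of_bool (\<forall>v\<in>S i. X v))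
       = (\<Sum>i\<in>I. \<Sum>j\<in>I. w i * w j * (p ^ card (S i \<union> S j) - p ^ (card (S i) + card (S j))))"
proof -
  let ?E = "measure_pmf.expectation (bern_field N p)"
  let ?Y = "\<lambda>X. \<Sum>i\<in>I. w i * of_bool (\<forall>v\<in>S i. X v)"
  have square: "(?Y X)\<^sup>2 = (\<Sum>i\<in>I. \<Sum>j\<in>I. w i * w j * of_bool (\<forall>v\<in>S i \<union> S j. X v))" for X
    by (simp add: power2_eq_square sum_product ball_Un of_bool_conj algebra_simps)
  have mean: "?E ?Y = (\<Sum>i\<in>I. w i * p ^ card (S i))"
    using S p by (simp add: expectation_bern_field_all_selected)
  have second_moment: "?E (\<lambda>X. (?Y X)\<^sup>2) = (\<Sum>i\<in>I. \<Sum>j\<in>I. w i * w j * p ^ card (S i \<union> S j))"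
    using S p by (simp add: square expectation_bern_field_all_selected)
  have "measure_pmf.variance (bern_field N p) ?Y = ?E (\<lambda>X. (?Y X)\<^sup>2) - (?E ?Y)\<^sup>2"
    by (rule measure_pmf.variance_eq) simp_all
  also have "\<dots> = (\<Sum>i\<in>I. \<Sum>j\<in>I. w i * w j * p ^ card (S i \<union> S j))
      - (\<Sum>i\<in>I. w i * p ^ card (S i))\<^sup>2"
    by (simp only: mean second_moment)
  finally show ?thesis
    by (simp add: power2_eq_square sum_product power_add sum_subtractf algebra_simps)
qed

lemma sum_of_bool_subset_choose:
  assumes "finite U" "J \<subseteq> U"
  shows "(\<Sum>A\<in>{A. A \<subseteq> U \<and> card A = K}. of_bool (A \<subseteq> J))
       = (of_nat (card J choose K) :: 'a :: semiring_1)"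
proof -
  have "{A. A \<subseteq> U \<and> card A = K} \<inter> {A. A \<subseteq> J} = {A. A \<subseteq> J \<and> card A = K}"
    using assms(2) by auto
  with assms show ?thesis
    by (simp add: n_subsets finite_subset)
qed

lemma sum_choose_from_1:
  "j \<le> h \<Longrightarrow> (\<Sum>K=1..h. real (j choose K)) = 2 ^ j - 1"
proof -
  assume "j \<le> h"
  then have "(\<Sum>K=0..h. real (j choose K)) = (\<Sum>K=0..j. real (j choose K))"
    by (intro sum.mono_neutral_right) auto
  also have "\<dots> = 2 ^ j"
    by (simp flip: of_nat_sum add: choose_row_sum atLeast0AtMost)
  finally show ?thesis
    by (simp add: sum.atLeast_Suc_atMost)
qed

definition overlap_weight :: "nat \<Rightarrow> real \<Rightarrow> nat \<Rightarrow> real" where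
  "overlap_weight h p j = (\<Sum>K=1..h. p ^ (2 * h - K) * real (j choose K))"

lemma overlap_weight_0 [simp]: "overlap_weight h p 0 = 0"
  by (auto simp: overlap_weight_def intro!: sum.neutral)

lemma power_diff_le_overlap_weight:
  assumes "0 \<le> p" "j \<le> h"
  shows "p ^ (2 * h - j) - p ^ (2 * h) \<le> overlap_weight h p j"
proof (cases "j = 0")
  case True
  then show ?thesis by simp
next
  case False
  have "p ^ (2 * h - j) = p ^ (2 * h - j) * real (j choose j)"
    by simp
  also have "\<dots> \<le> overlap_weight h p j"
    unfolding overlap_weight_def using False assms
    by (intro member_le_sum[where f = "\<lambda>K. p ^ (2 * h - K) * real (j choose K)"]) auto
  finally show ?thesis
    using zero_le_power[OF assms(1), of "2 * h"] by linarith
qed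

lemma overlap_weight_le_power_mult:
  assumes "0 \<le> p" "p \<le> 1" "j \<le> h"
  shows "overlap_weight h p j \<le> p ^ (2 * h - j) * (2 ^ j - 1)"
proof -
  have "overlap_weight h p j \<le> (\<Sum>K=1..h. p ^ (2 * h - j) * real (j choose K))"
    unfolding overlap_weight_def
  proof (rule sum_mono)
    fix K
    show "p ^ (2 * h - K) * real (j choose K) \<le> p ^ (2 * h - j) * real (j choose K)"
    proof (cases "K \<le> j")
      case True
      then show ?thesis
        using assms by (intro mult_right_mono power_decreasing) auto
    qed (simp add: binomial_eq_0)
  qed
  also have "\<dots> = p ^ (2 * h - j) * (2 ^ j - 1)"
    by (simp only: sum_distrib_left[symmetric] sum_choose_from_1[OF assms(3)])
  finally show ?thesis .
qed

lemma scaled_overlap_weight_le_power_diff: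
  assumes "0 \<le> p" "p \<le> 1" "j \<le> h"
  shows "(1 - p) * overlap_weight h p j / (2 ^ h - 1) \<le> p ^ (2 * h - j) - p ^ (2 * h)"
proof (cases "j = 0")
  case True
  then show ?thesis by simp
next
  case False
  have denominator: "(2::real) ^ j - 1 \<le> 2 ^ h - 1" "0 < (2::real) ^ h - 1"
    using False assms(3) by (simp_all add: power_increasing)
  have "(1 - p) * overlap_weight h p j / (2 ^ h - 1)
      \<le> (1 - p) * (p ^ (2 * h - j) * (2 ^ j - 1)) / (2 ^ h - 1)"
    using assms denominator by (intro divide_right_mono mult_left_mono overlap_weight_le_power_mult) auto
  also have "\<dots> \<le> (1 - p) * p ^ (2 * h - j)"
  proof -
    have "(1 - p) * (p ^ (2 * h - j) * (2 ^ j - 1)) \<le> (1 - p) * (p ^ (2 * h - j) * (2 ^ h - 1))"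
      using assms denominator(1) by (intro mult_left_mono) simp_all
    then show ?thesis
      using denominator(2) by (simp add: divide_le_eq)
  qed
  also have "\<dots> \<le> (1 - p ^ j) * p ^ (2 * h - j)"
    using assms False by (intro mult_right_mono)
      (simp_all add: power_decreasing[of 1 j p, simplified])
  also have "\<dots> = p ^ (2 * h - j) - p ^ (2 * h)"
    using assms(3) by (simp add: algebra_simps flip: power_add)
  finally show ?thesis .
qed

definition tuple_weight ::
    "nat \<Rightarrow> (nat \<Rightarrow> nat \<Rightarrow> bool) \<Rightarrow> (nat \<Rightarrow> nat \<Rightarrow> bool) \<Rightarrow> (nat \<Rightarrow> nat) \<Rightarrow> real" where
  "tuple_weight h adjH a s = M_H h adjH a s / real (card (AutH h adjH))"

lemma tuple_weight_nonneg: "0 \<le> tuple_weight h adjH a s"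
  unfolding tuple_weight_def M_H_def adjval_def by (intro divide_nonneg_nonneg prod_nonneg) auto

lemma finite_tuples: "finite (tuples N h)"
  by (rule finite_subset[of _ "{0..<h} \<rightarrow>\<^sub>E {1..N}"]) (auto simp: tuples_def intro: finite_PiE)

lemma image_tuple_subset: "s \<in> tuples N h \<Longrightarrow> s ` {0..<h} \<subseteq> {1..N}"
  by (auto simp: tuples_def)

lemma card_image_tuple: "s \<in> tuples N h \<Longrightarrow> card (s ` {0..<h}) = h"
  by (simp add: tuples_def card_image)

lemma T_HG_eq_monomial_sum:
  "T_HG h adjH N a X = (\<Sum>s\<in>tuples N h. tuple_weight h adjH a s * of_bool (\<forall>v\<in>s ` {0..<h}. X v))"
  by (simp add: T_HG_def tuple_weight_def sum_distrib_left prod_of_bool flip: of_bool_def)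

lemma t_H_eq_weight_sum:
  "t_H h adjH N a A = (\<Sum>s\<in>tuples N h. tuple_weight h adjH a s * of_bool (A \<subseteq> s ` {0..<h}))"
proof -
  have "t_H h adjH N a A = (\<Sum>s\<in>{s \<in> tuples N h. A \<subseteq> s ` {0..<h}}. tuple_weight h adjH a s)"
    by (simp add: t_H_def tuple_weight_def sum_distrib_left)
  also have "\<dots> = (\<Sum>s\<in>tuples N h. tuple_weight h adjH a s * of_bool (A \<subseteq> s ` {0..<h}))"
    by (subst sum.inter_filter[OF finite_tuples]) (intro sum.cong refl, simp)
  finally show ?thesis .
qed

lemma variance_T_HG_eq_pair_sum:
  assumes "0 \<le> p" "p \<le> 1"
  shows "measure_pmf.variance (bern_field N p) (T_HG h adjH N a)
       = (\<Sum>s\<in>tuples N h. \<Sum>s'\<in>tuples N h. tuple_weight h adjH a s * tuple_weight h adjH a s' *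
            (p ^ (2 * h - card (s ` {0..<h} \<inter> s' ` {0..<h})) - p ^ (2 * h)))"
proof -
  have union: "card (s ` {0..<h} \<union> s' ` {0..<h}) = 2 * h - card (s ` {0..<h} \<inter> s' ` {0..<h})"
    if "s \<in> tuples N h" "s' \<in> tuples N h" for s s'
    using card_Un_Int[of "s ` {0..<h}" "s' ` {0..<h}"] that by (simp add: card_image_tuple)
  have "T_HG h adjH N a
      = (\<lambda>X. \<Sum>s\<in>tuples N h. tuple_weight h adjH a s * of_bool (\<forall>v\<in>s ` {0..<h}. X v))"
    by (rule ext) (rule T_HG_eq_monomial_sum)
  then show ?thesis
    using variance_bern_field_monomial_sum[where I = "tuples N h" and S = "\<lambda>s. s ` {0..<h}",
        OF image_tuple_subset assms]
    by (simp add: union card_image_tuple mult_2 cong: sum.cong)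
qed

lemma beta_H_eq_pair_sum:
  "beta_H h adjH N a p
     = (\<Sum>s\<in>tuples N h. \<Sum>s'\<in>tuples N h. tuple_weight h adjH a s * tuple_weight h adjH a s' *
          overlap_weight h p (card (s ` {0..<h} \<inter> s' ` {0..<h})))"
proof -
  let ?T = "tuples N h" and ?w = "tuple_weight h adjH a"
  let ?I = "\<lambda>s s'. card (s ` {0..<h} \<inter> s' ` {0..<h})"
  have square: "(t_H h adjH N a A)\<^sup>2
      = (\<Sum>s\<in>?T. \<Sum>s'\<in>?T. ?w s * ?w s' * of_bool (A \<subseteq> s ` {0..<h} \<inter> s' ` {0..<h}))" for A
    by (simp only: t_H_eq_weight_sum power2_eq_square sum_product of_bool_conj Int_subset_iff mult_ac)
  have layer: "(\<Sum>A\<in>{A. A \<subseteq> {1..N} \<and> card A = K}. (t_H h adjH N a A)\<^sup>2)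
      = (\<Sum>s\<in>?T. \<Sum>s'\<in>?T. ?w s * ?w s' * real (?I s s' choose K))" for K
  proof -
    have "(\<Sum>A\<in>{A. A \<subseteq> {1..N} \<and> card A = K}. (t_H h adjH N a A)\<^sup>2)
        = (\<Sum>s\<in>?T. \<Sum>s'\<in>?T. ?w s * ?w s' *
             (\<Sum>A\<in>{A. A \<subseteq> {1..N} \<and> card A = K}. of_bool (A \<subseteq> s ` {0..<h} \<inter> s' ` {0..<h})))"
      unfolding square sum_distrib_left by (subst sum.swap) (rule sum.cong[OF refl], rule sum.swap)
    also have "\<dots> = (\<Sum>s\<in>?T. \<Sum>s'\<in>?T. ?w s * ?w s' * real (?I s s' choose K))"
    proof (intro sum.cong refl)
      fix s s'
      assume "s \<in> ?T"
      then have "s ` {0..<h} \<inter> s' ` {0..<h} \<subseteq> {1..N}"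
        using image_tuple_subset by blast
      then show "?w s * ?w s' * (\<Sum>A\<in>{A. A \<subseteq> {1..N} \<and> card A = K}. of_bool (A \<subseteq> s ` {0..<h} \<inter> s' ` {0..<h}))
          = ?w s * ?w s' * real (?I s s' choose K)"
        by (simp only: sum_of_bool_subset_choose[OF finite_atLeastAtMost])
    qed
    finally show ?thesis .
  qed
  have "beta_H h adjH N a p
      = (\<Sum>K=1..h. \<Sum>s\<in>?T. \<Sum>s'\<in>?T. p ^ (2 * h - K) * (?w s * ?w s' * real (?I s s' choose K)))"
    unfolding beta_H_def layer by (simp only: sum_distrib_left)
  also have "\<dots> = (\<Sum>s\<in>?T. \<Sum>s'\<in>?T. \<Sum>K=1..h. p ^ (2 * h - K) * (?w s * ?w s' * real (?I s s' choose K)))"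
    by (subst sum.swap) (simp only: sum.swap[of _ "{1..h}"])
  also have "\<dots> = (\<Sum>s\<in>?T. \<Sum>s'\<in>?T. ?w s * ?w s' * overlap_weight h p (?I s s'))"
    unfolding overlap_weight_def sum_distrib_left by (simp only: mult_ac)
  finally show ?thesis .
qed

lemma pair_sum_overlap_mono:
  assumes "\<And>j. j \<le> h \<Longrightarrow> f j \<le> g j"
  shows "(\<Sum>s\<in>tuples N h. \<Sum>s'\<in>tuples N h. tuple_weight h adjH a s * tuple_weight h adjH a s' *
            f (card (s ` {0..<h} \<inter> s' ` {0..<h})))
       \<le> (\<Sum>s\<in>tuples N h. \<Sum>s'\<in>tuples N h. tuple_weight h adjH a s * tuple_weight h adjH a s' *
            g (card (s ` {0..<h} \<inter> s' ` {0..<h})))"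
proof (intro sum_mono mult_left_mono assms)
  fix s s'
  assume "s \<in> tuples N h"
  then show "card (s ` {0..<h} \<inter> s' ` {0..<h}) \<le> h"
    using card_mono[OF _ Int_lower1, of "s ` {0..<h}" "s' ` {0..<h}"] card_image_tuple by simp
  show "0 \<le> tuple_weight h adjH a s * tuple_weight h adjH a s'"
    by (simp add: tuple_weight_nonneg)
qed

theorem lemma5p1:
  fixes h N :: nat and adjH a :: "nat \<Rightarrow> nat \<Rightarrow> bool" and p :: real
  assumes "simple_graph_on {0..<h} adjH"
    and "connected_graph_on {0..<h} adjH"
    and "simple_graph_on {1..N} a"
    and "0 < p" and "p < 1"
  shows "(1 - p) * beta_H h adjH N a p / (2 ^ h - 1)
           \<le> measure_pmf.variance (bern_field N p) (T_HG h adjH N a)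
       \<and> measure_pmf.variance (bern_field N p) (T_HG h adjH N a) \<le> beta_H h adjH N a p"
proof -
  have p: "0 \<le> p" "p \<le> 1"
    using assms(4,5) by simp_all
  have "(1 - p) * beta_H h adjH N a p / (2 ^ h - 1)
      = (\<Sum>s\<in>tuples N h. \<Sum>s'\<in>tuples N h. tuple_weight h adjH a s * tuple_weight h adjH a s' *
          ((1 - p) * overlap_weight h p (card (s ` {0..<h} \<inter> s' ` {0..<h})) / (2 ^ h - 1)))"
    unfolding beta_H_eq_pair_sum sum_distrib_left sum_divide_distrib
    by (intro sum.cong refl) (simp only: mult_ac times_divide_eq_right)
  also have "\<dots> \<le> measure_pmf.variance (bern_field N p) (T_HG h adjH N a)"
    unfolding variance_T_HG_eq_pair_sum[OF p]
    by (rule pair_sum_overlap_mono) (rule scaled_overlap_weight_le_power_diff[OF p])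
  finally have lower: "(1 - p) * beta_H h adjH N a p / (2 ^ h - 1)
      \<le> measure_pmf.variance (bern_field N p) (T_HG h adjH N a)" .
  have upper: "measure_pmf.variance (bern_field N p) (T_HG h adjH N a) \<le> beta_H h adjH N a p"
    unfolding variance_T_HG_eq_pair_sum[OF p] beta_H_eq_pair_sum
    by (rule pair_sum_overlap_mono) (rule power_diff_le_overlap_weight[OF p(1)])
  from lower upper show ?thesis ..
qed

end
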